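(* For every positive integer $k$, there exist a finite simple undirected graph $G$ and an orientation $\vec{G}$ of $G$ such that $k\geq \operatorname{adim}(G)\geq\operatorname{bdim}(G)$ and $\operatorname{adim}(\vec{G})\geq\operatorname{bdim}(\vec{G})\geq 2^k$.
   Context: An orientation of $G$ is a directed graph obtained by assigning a direction to each edge of $G$. In an undirected graph, $d(u,v)$ is the shortest-path distance; in a directed graph, $d(u,v)$ is the length of a shortest directed path from $u$ to $v$; in both cases $d(u,v)=\infty$ if no such path exists. For a nonnegative integer $k$, $d_k(u,v)=\min(d(u,v),k+1)$. A function $f:V\to\mathbb{Z}_{\geq 0}$ is a resolving broadcast if for any distinct vertices $x,y$ there is $z$ with $f(z)>0$ and $d_{f(z)}(z,x)\neq d_{f(z)}(z,y)$. The broadcast dimension $\operatorname{bdim}$ is the minimum of $\sum_v f(v)$ over resolving broadcasts $f$. A set $A$ of vertices is an adjacency resolving set if for any distinct $x,y$ there is $z\in A$ with $d_1(z,x)\neq d_1(z,y)$; the adjacency dimension $\operatorname{adim}$ is the minimum cardinality of such a set. *)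

theory Defs
  imports Main "HOL-Library.Extended_Nat"
begin

definition simple_graph :: "'a set \<Rightarrow> 'a set set \<Rightarrow> bool" where
  "simple_graph V E \<longleftrightarrow> finite V \<and>
     (\<forall>e\<in>E. \<exists>u v. u \<noteq> v \<and> u \<in> V \<and> v \<in> V \<and> e = {u, v})"

definition urel :: "'a set set \<Rightarrow> ('a \<times> 'a) set" where
  "urel E = {(u, v). u \<noteq> v \<and> {u, v} \<in> E}"

definition is_orientation :: "'a set set \<Rightarrow> ('a \<times> 'a) set \<Rightarrow> bool" where
  "is_orientation E D \<longleftrightarrow>
     (\<forall>(u, v)\<in>D. {u, v} \<in> E) \<and>
     (\<forall>u v. u \<noteq> v \<and> {u, v} \<in> E \<longrightarrow> ((u, v) \<in> D \<longleftrightarrow> (v, u) \<notin> D))"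

text \<open>Shortest (directed) path distance w.r.t. an arc relation R; infinity if no path.\<close>
definition dist :: "('a \<times> 'a) set \<Rightarrow> 'a \<Rightarrow> 'a \<Rightarrow> enat" where
  "dist R u v = (INF n \<in> {n. (u, v) \<in> R ^^ n}. enat n)"

definition distk :: "('a \<times> 'a) set \<Rightarrow> nat \<Rightarrow> 'a \<Rightarrow> 'a \<Rightarrow> enat" where
  "distk R k u v = min (dist R u v) (enat (k + 1))"

definition resolving_broadcast :: "'a set \<Rightarrow> ('a \<times> 'a) set \<Rightarrow> ('a \<Rightarrow> nat) \<Rightarrow> bool" where
  "resolving_broadcast V R f \<longleftrightarrow>
     (\<forall>x\<in>V. \<forall>y\<in>V. x \<noteq> y \<longrightarrow>
        (\<exists>z\<in>V. f z > 0 \<and> distk R (f z) z x \<noteq> distk R (f z) z y))"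

definition bdim :: "'a set \<Rightarrow> ('a \<times> 'a) set \<Rightarrow> nat" where
  "bdim V R = Inf {(\<Sum>v\<in>V. f v) | f. resolving_broadcast V R f}"

definition adj_resolving :: "'a set \<Rightarrow> ('a \<times> 'a) set \<Rightarrow> 'a set \<Rightarrow> bool" where
  "adj_resolving V R A \<longleftrightarrow> A \<subseteq> V \<and>
     (\<forall>x\<in>V. \<forall>y\<in>V. x \<noteq> y \<longrightarrow> (\<exists>z\<in>A. distk R 1 z x \<noteq> distk R 1 z y))"

definition adim :: "'a set \<Rightarrow> ('a \<times> 'a) set \<Rightarrow> nat" where
  "adim V R = Inf {card A | A. adj_resolving V R A}"

end

theory Submission
  imports Defs "HOL-Library.Nat_Bijection"
begin

text \<open>Take \<open>k\<close> reference vertices \<open>r\<^sub>i\<close> and \<open>2\<^sup>k\<close> vertices \<open>u\<^sub>U\<close>, \<open>U \<subseteq> {0..<k}\<close>, with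
  \<open>r\<^sub>i\<close> adjacent to \<open>u\<^sub>U\<close> iff \<open>i \<in> U\<close>. The reference vertices resolve the graph by
  adjacency, so its adjacency dimension is at most \<open>k\<close>. The orientation splits the
  \<open>k + 2\<^sup>k\<close> vertices into \<open>k\<close> classes, each with a center that has an arc to every other
  vertex of its class, such that every other arc entering a class enters all of its
  vertices. Two vertices of a class are then at equal distance from every third vertex,
  so a resolving broadcast vanishes on at most one vertex per class and costs at least
  \<open>2\<^sup>k\<close>. Finally, \<open>bdim \<le> adim\<close> always holds: an adjacency resolving set is a resolving
  broadcast with all values \<open>1\<close>.\<close>

lemma dist_le: "(u, v) \<in> R ^^ n \<Longrightarrow> dist R u v \<le> enat n"
  unfolding dist_def by (rule INF_lower2[of n]) auto

lemma dist_ge: "(\<And>n. (u, v) \<in> R ^^ n \<Longrightarrow> m \<le> n) \<Longrightarrow> enat m \<le> dist R u v"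
  unfolding dist_def by (rule INF_greatest) simp

lemma dist_self: "dist R x x = 0"
  using dist_le[of x x 0 R] by (simp add: enat_0)

lemma dist_ge_1: "x \<noteq> y \<Longrightarrow> 1 \<le> dist R x y"
proof -
  assume "x \<noteq> y"
  then have "1 \<le> n" if "(x, y) \<in> R ^^ n" for n
    using that by (cases n) auto
  then show ?thesis using dist_ge[of x y R 1] by (simp add: one_enat_def)
qed

lemma dist_eq_1: "x \<noteq> y \<Longrightarrow> (x, y) \<in> R \<Longrightarrow> dist R x y = 1"
  using dist_le[of x y 1 R] dist_ge_1[of x y R] by (simp add: one_enat_def)

lemma dist_ge_2: "x \<noteq> y \<Longrightarrow> (x, y) \<notin> R \<Longrightarrow> 2 \<le> dist R x y"
proof -
  assume "x \<noteq> y" "(x, y) \<notin> R"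
  then have "2 \<le> n" if "(x, y) \<in> R ^^ n" for n
    using that by (cases "n = 0 \<or> n = 1") auto
  then show ?thesis using dist_ge[of x y R 2] by (simp add: numeral_eq_enat)
qed

lemma distk_self_neq: "x \<noteq> y \<Longrightarrow> distk R k x x \<noteq> distk R k x y"
proof -
  assume "x \<noteq> y"
  have "0 < dist R x y" by (rule less_le_trans[OF zero_less_one dist_ge_1]) fact
  then show ?thesis by (auto simp: distk_def dist_self min_def zero_enat_def)
qed

lemma distk_1_eq_1_iff: "z \<noteq> x \<Longrightarrow> distk R 1 z x = 1 \<longleftrightarrow> (z, x) \<in> R"
proof (cases "(z, x) \<in> R")
  case False
  moreover assume "z \<noteq> x"
  ultimately have "enat 2 \<le> dist R z x" using dist_ge_2 by (simp add: numeral_eq_enat)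
  with False show ?thesis by (auto simp: distk_def min_def one_enat_def)
qed (simp add: distk_def dist_eq_1 one_enat_def)

lemma adj_resolving_if_neighbours_separate:
  assumes "A \<subseteq> V"
    and separate: "\<And>x y. x \<in> V - A \<Longrightarrow> y \<in> V - A \<Longrightarrow> x \<noteq> y \<Longrightarrow>
                     \<exists>z\<in>A. (z, x) \<in> R \<longleftrightarrow> (z, y) \<notin> R"
  shows "adj_resolving V R A"
  unfolding adj_resolving_def
proof (intro conjI ballI impI)
  fix x y assume "x \<in> V" "y \<in> V" "x \<noteq> y"
  consider "x \<in> A" | "y \<in> A" | "x \<in> V - A" "y \<in> V - A" using \<open>x \<in> V\<close> \<open>y \<in> V\<close> by blast
  then show "\<exists>z\<in>A. distk R 1 z x \<noteq> distk R 1 z y"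
  proof cases
    case 3
    then obtain z where "z \<in> A" "(z, x) \<in> R \<longleftrightarrow> (z, y) \<notin> R"
      using separate \<open>x \<noteq> y\<close> by blast
    moreover have "z \<noteq> x" "z \<noteq> y" using 3 \<open>z \<in> A\<close> by auto
    ultimately show ?thesis using distk_1_eq_1_iff by metis
  next
    case 1
    then show ?thesis using distk_self_neq[OF \<open>x \<noteq> y\<close>] by blast
  next
    case 2
    then show ?thesis using distk_self_neq[of y x R 1] \<open>x \<noteq> y\<close> by (intro bexI[of _ y]) auto
  qed
qed fact

lemma adim_le_card: "adj_resolving V R A \<Longrightarrow> adim V R \<le> card A"
  unfolding adim_def by (rule cInf_lower) auto

lemma adj_resolving_self: "adj_resolving V R V"
  by (rule adj_resolving_if_neighbours_separate) auto

lemma resolving_broadcast_of_adj_resolving: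
  assumes "adj_resolving V R A"
  shows "resolving_broadcast V R (\<lambda>v. if v \<in> A then 1 else 0)"
  unfolding resolving_broadcast_def
proof (intro ballI impI)
  fix x y assume "x \<in> V" "y \<in> V" "x \<noteq> y"
  then obtain z where "z \<in> A" "distk R 1 z x \<noteq> distk R 1 z y"
    using assms unfolding adj_resolving_def by blast
  moreover have "z \<in> V" using assms \<open>z \<in> A\<close> unfolding adj_resolving_def by blast
  ultimately show "\<exists>z\<in>V. 0 < (if z \<in> A then 1 else 0 :: nat) \<and>
                     distk R (if z \<in> A then 1 else 0) z x \<noteq> distk R (if z \<in> A then 1 else 0) z y"
    by auto
qed

lemma bdim_le_adim:
  assumes "finite V"
  shows "bdim V R \<le> adim V R"
proof -
  have "adim V R \<in> {card A | A. adj_resolving V R A}"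
    unfolding adim_def using adj_resolving_self by (intro Inf_nat_def1) blast
  then obtain A where A: "adj_resolving V R A" and adim: "adim V R = card A" by blast
  have "A \<subseteq> V" using A unfolding adj_resolving_def by blast
  then have "(\<Sum>v\<in>V. if v \<in> A then 1 else 0 :: nat) = card A"
    using \<open>finite V\<close> by (simp add: sum.If_cases Int_absorb1)
  then have "bdim V R \<le> card A"
    unfolding bdim_def using resolving_broadcast_of_adj_resolving[OF A]
    by (intro cInf_lower) (auto intro!: exI[of _ "\<lambda>v. if v \<in> A then 1 else 0"])
  then show ?thesis using adim by simp
qed

definition in_twins :: "('a \<times> 'a) set \<Rightarrow> 'a \<Rightarrow> 'a \<Rightarrow> bool" where
  "in_twins R x y \<longleftrightarrow> (\<forall>w. w \<noteq> x \<longrightarrow> w \<noteq> y \<longrightarrow> ((w, x) \<in> R \<longleftrightarrow> (w, y) \<in> R))"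

lemma in_twins_sym: "in_twins R x y \<Longrightarrow> in_twins R y x"
  unfolding in_twins_def by blast

lemma in_twins_walk:
  assumes twins: "in_twins R x y" and "z \<noteq> x" and "(z, x) \<in> R ^^ n"
  shows "\<exists>m\<le>n. (z, y) \<in> R ^^ m"
  using assms(3)
proof (induction n rule: less_induct)
  case (less n)
  with \<open>z \<noteq> x\<close> obtain m w where n: "n = Suc m" and walk: "(z, w) \<in> R ^^ m" and "(w, x) \<in> R"
    by (cases n) auto
  consider "w = x" | "w = y" | "w \<noteq> x" "w \<noteq> y" by blast
  then show ?case
  proof cases
    case 1
    then obtain m' where "m' \<le> m" "(z, y) \<in> R ^^ m'" using less.IH[of m] walk n by auto
    then show ?thesis using n by (auto intro: le_SucI)
  next
    case 2
    then show ?thesis using walk n by (intro exI[of _ m]) auto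
  next
    case 3
    with twins \<open>(w, x) \<in> R\<close> have "(w, y) \<in> R" unfolding in_twins_def by blast
    then show ?thesis using walk n by (intro exI[of _ n]) (auto intro: relpow_Suc_I)
  qed
qed

lemma dist_eq_if_in_twins:
  assumes "in_twins R x y" "z \<noteq> x" "z \<noteq> y"
  shows "dist R z x = dist R z y"
proof -
  have le: "dist R z y \<le> dist R z x" if tw: "in_twins R x y" and zx: "z \<noteq> x" for x y
    unfolding dist_def[of R z x]
  proof (rule INF_greatest)
    fix n assume "n \<in> {n. (z, x) \<in> R ^^ n}"
    then obtain m where "m \<le> n" "(z, y) \<in> R ^^ m" using in_twins_walk[OF tw zx] by auto
    then show "dist R z y \<le> enat n" by (meson dist_le enat_ord_simps(1) order_trans)
  qed
  show ?thesis using le[of x y] le[of y x] assms in_twins_sym by (metis antisym)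
qed

lemma resolving_broadcast_pos_on_twin:
  assumes f: "resolving_broadcast V R f" and "x \<in> V" "y \<in> V" "x \<noteq> y" "in_twins R x y"
  shows "0 < f x \<or> 0 < f y"
proof -
  obtain z where z: "0 < f z" "distk R (f z) z x \<noteq> distk R (f z) z y"
    using f[unfolded resolving_broadcast_def] \<open>x \<in> V\<close> \<open>y \<in> V\<close> \<open>x \<noteq> y\<close> by blast
  have "z = x \<or> z = y"
  proof (rule ccontr)
    assume "\<not> (z = x \<or> z = y)"
    then have "dist R z x = dist R z y"
      using dist_eq_if_in_twins[OF \<open>in_twins R x y\<close>] by simp
    then show False using z(2) unfolding distk_def by simp
  qed
  then show ?thesis using z by auto
qed

lemma bdim_ge_card_minus_twin_classes:
  assumes "finite V"
    and twins: "\<And>x y. x \<in> V \<Longrightarrow> y \<in> V \<Longrightarrow> x \<noteq> y \<Longrightarrow> c x = c y \<Longrightarrow> in_twins R x y"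
  shows "card V - card (c ` V) \<le> bdim V R"
  unfolding bdim_def
proof (rule cInf_greatest)
  show "{\<Sum>v\<in>V. f v |f. resolving_broadcast V R f} \<noteq> {}"
    using resolving_broadcast_of_adj_resolving[OF adj_resolving_self] by blast
next
  fix s assume "s \<in> {\<Sum>v\<in>V. f v |f. resolving_broadcast V R f}"
  then obtain f where s: "s = (\<Sum>v\<in>V. f v)" and f: "resolving_broadcast V R f" by blast
  define Z where "Z = {v \<in> V. f v = 0}"
  have "inj_on c Z"
  proof (rule inj_onI)
    fix x y assume x: "x \<in> Z" and y: "y \<in> Z" and "c x = c y"
    show "x = y"
    proof (rule ccontr)
      assume "x \<noteq> y"
      with x y \<open>c x = c y\<close> have "in_twins R x y" by (intro twins) (auto simp: Z_def)
      then show False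
        using resolving_broadcast_pos_on_twin[OF f _ _ \<open>x \<noteq> y\<close>] x y by (auto simp: Z_def)
    qed
  qed
  then have "card Z \<le> card (c ` V)"
    by (rule card_inj_on_le) (auto simp: Z_def \<open>finite V\<close>)
  then have "card V - card (c ` V) \<le> card (V - Z)"
    using \<open>finite V\<close> by (simp add: card_Diff_subset Z_def)
  also have "\<dots> = (\<Sum>v\<in>V - Z. 1)" by simp
  also have "\<dots> \<le> (\<Sum>v\<in>V - Z. f v)"
    by (rule sum_mono) (auto simp: Z_def)
  also have "\<dots> \<le> s"
    unfolding s using \<open>finite V\<close> by (rule sum_mono2) auto
  finally show "card V - card (c ` V) \<le> s" .
qed

definition underlying :: "('a \<times> 'a) set \<Rightarrow> 'a set set" where
  "underlying D = {{u, v} | u v. (u, v) \<in> D}"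

lemma doubleton_in_underlying_iff: "{u, v} \<in> underlying D \<longleftrightarrow> (u, v) \<in> D \<or> (v, u) \<in> D"
  unfolding underlying_def by (auto simp: doubleton_eq_iff)

lemma simple_graph_underlying:
  assumes "finite V" "D \<subseteq> V \<times> V" "irrefl D"
  shows "simple_graph V (underlying D)"
  unfolding simple_graph_def underlying_def
proof (intro conjI ballI)
  fix e assume "e \<in> {{u, v} | u v. (u, v) \<in> D}"
  then obtain u v where "e = {u, v}" "(u, v) \<in> D" by blast
  with assms(2,3) show "\<exists>u v. u \<noteq> v \<and> u \<in> V \<and> v \<in> V \<and> e = {u, v}"
    by (metis irreflD mem_Sigma_iff subsetD)
qed fact

lemma is_orientation_underlying: "asym D \<Longrightarrow> is_orientation (underlying D) D"
  unfolding is_orientation_def by (auto simp: doubleton_in_underlying_iff dest: asymD)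

lemma urel_underlying: "asym D \<Longrightarrow> urel (underlying D) = D \<union> D\<inverse>"
  unfolding urel_def by (auto simp: doubleton_in_underlying_iff dest: asymD)

text \<open>The witness graphs live on \<open>nat\<close>: odd numbers \<open>ref_vtx i\<close> are the reference
  vertices \<open>r\<^sub>i\<close>, even numbers \<open>set_vtx U\<close> encode the vertices \<open>u\<^sub>U\<close>, \<open>U \<subseteq> {0..<k}\<close>.\<close>

definition ref_vtx :: "nat \<Rightarrow> nat" where
  "ref_vtx i = 2 * i + 1"

definition set_vtx :: "nat set \<Rightarrow> nat" where
  "set_vtx U = 2 * set_encode U"

definition vtx_set :: "nat \<Rightarrow> nat set" where
  "vtx_set n = set_decode (n div 2)"

definition vclass :: "nat \<Rightarrow> nat" where
  "vclass n = (if odd n then n div 2 else Max (insert 0 (vtx_set n)))"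

text \<open>Class \<open>0\<close> cannot be centered at \<open>r\<^sub>0\<close>, which is not adjacent to \<open>set_vtx {}\<close>.\<close>
definition class_center :: "nat \<Rightarrow> nat" where
  "class_center c = (if c = 0 then set_vtx {0} else ref_vtx c)"

text \<open>Besides the arcs from each center to the rest of its class, \<open>u\<^sub>U\<close> sends an arc to
  every vertex of each class \<open>c \<in> U\<close> below \<open>Max U\<close>: this produces the edges \<open>r\<^sub>c u\<^sub>U\<close> not
  coming from centers, while all arcs entering a class except the center's enter all of it.\<close>
definition gadget_arc :: "nat \<Rightarrow> nat \<Rightarrow> bool" where
  "gadget_arc x y \<longleftrightarrow> (x = class_center (vclass y) \<and> x \<noteq> y) \<or>
     (even x \<and> vclass y \<in> vtx_set x \<and> vclass y < vclass x)"

definition gadget_verts :: "nat \<Rightarrow> nat set" where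
  "gadget_verts k = ref_vtx ` {..<k} \<union> set_vtx ` Pow {..<k}"

definition gadget_arcs :: "nat \<Rightarrow> (nat \<times> nat) set" where
  "gadget_arcs k = {(x, y). x \<in> gadget_verts k \<and> y \<in> gadget_verts k \<and> gadget_arc x y}"

lemma ref_vtx_neq_set_vtx [simp]: "ref_vtx i \<noteq> set_vtx U" "set_vtx U \<noteq> ref_vtx i"
  unfolding ref_vtx_def set_vtx_def by presburger+

lemma odd_ref_vtx [simp]: "odd (ref_vtx i)"
  by (simp add: ref_vtx_def)

lemma even_set_vtx [simp]: "even (set_vtx U)"
  by (simp add: set_vtx_def)

lemma inj_ref_vtx: "inj ref_vtx"
  by (rule injI) (simp add: ref_vtx_def)

lemma inj_on_set_vtx: "inj_on set_vtx (Collect finite)"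
  by (rule inj_onI) (simp add: set_vtx_def set_encode_eq)

lemma vclass_ref_vtx [simp]: "vclass (ref_vtx i) = i"
  by (simp add: vclass_def ref_vtx_def)

lemma vtx_set_set_vtx [simp]: "finite U \<Longrightarrow> vtx_set (set_vtx U) = U"
  by (simp add: vtx_set_def set_vtx_def)

lemma vclass_set_vtx [simp]: "finite U \<Longrightarrow> vclass (set_vtx U) = Max (insert 0 U)"
  by (simp add: vclass_def set_vtx_def vtx_set_def)

lemma vclass_class_center [simp]: "vclass (class_center c) = c"
  by (simp add: class_center_def)

lemma gadget_arc_iff_class:
  "w \<noteq> x \<Longrightarrow> gadget_arc w x \<longleftrightarrow>
     w = class_center (vclass x) \<or> (even w \<and> vclass x \<in> vtx_set w \<and> vclass x < vclass w)"
  unfolding gadget_arc_def by blast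

lemma asym_gadget_arc: "gadget_arc x y \<Longrightarrow> \<not> gadget_arc y x"
  unfolding gadget_arc_def by (metis less_asym vclass_class_center)

lemma mem_iff_Max_insert_0:
  fixes U :: "nat set"
  assumes "finite U"
  shows "i \<in> U \<longleftrightarrow> (i \<noteq> 0 \<and> i = Max (insert 0 U)) \<or> (i = 0 \<and> U = {0}) \<or>
                     (i \<in> U \<and> i < Max (insert 0 U))"
proof -
  let ?m = "Max (insert 0 U)"
  have le: "u \<le> ?m" if "u \<in> U" for u using assms that by simp
  have m: "?m \<in> insert 0 U" using assms by (intro Max_in) auto
  have U0: "U = {0}" if "0 \<in> U" "?m = 0" using le that by fastforce
  show ?thesis
  proof
    assume iU: "i \<in> U"
    then consider "i < ?m" | "i = ?m" using le by fastforce
    then show "(i \<noteq> 0 \<and> i = ?m) \<or> (i = 0 \<and> U = {0}) \<or> (i \<in> U \<and> i < ?m)"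
      using iU U0 by cases auto
  qed (use m in auto)
qed

lemma gadget_arc_ref_set_iff:
  assumes "finite U"
  shows "gadget_arc (ref_vtx i) (set_vtx U) \<or> gadget_arc (set_vtx U) (ref_vtx i) \<longleftrightarrow> i \<in> U"
proof -
  have "ref_vtx i = class_center c \<longleftrightarrow> c = i \<and> i \<noteq> 0" for c
    using inj_ref_vtx by (auto simp: class_center_def inj_eq)
  then have "gadget_arc (ref_vtx i) (set_vtx U) \<longleftrightarrow> i \<noteq> 0 \<and> i = Max (insert 0 U)"
    using assms by (auto simp: gadget_arc_def)
  moreover have "set_vtx U = class_center i \<longleftrightarrow> i = 0 \<and> U = {0}"
    using inj_on_set_vtx assms by (auto simp: class_center_def inj_on_eq_iff)
  then have "gadget_arc (set_vtx U) (ref_vtx i) \<longleftrightarrow>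
               (i = 0 \<and> U = {0}) \<or> (i \<in> U \<and> i < Max (insert 0 U))"
    using assms by (auto simp: gadget_arc_def)
  ultimately show ?thesis using mem_iff_Max_insert_0[OF assms] by blast
qed

lemma finite_gadget_verts: "finite (gadget_verts k)"
  by (simp add: gadget_verts_def)

lemma card_gadget_verts: "card (gadget_verts k) = k + 2 ^ k"
proof -
  have "inj_on set_vtx (Pow {..<k})"
    using inj_on_set_vtx by (rule inj_on_subset) (auto intro: finite_subset)
  then have "card (set_vtx ` Pow {..<k}) = 2 ^ k" by (simp add: card_image card_Pow)
  moreover have "card (ref_vtx ` {..<k}) = k"
    using inj_ref_vtx by (simp add: card_image inj_on_subset)
  ultimately show ?thesis
    unfolding gadget_verts_def by (subst card_Un_disjoint) auto
qed

lemma vclass_lt_if_gadget_vert: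
  assumes "0 < k" "x \<in> gadget_verts k"
  shows "vclass x < k"
  using assms(2) unfolding gadget_verts_def
proof (elim UnE imageE)
  fix U assume U: "U \<in> Pow {..<k}" and x: "x = set_vtx U"
  have "finite U" using U finite_subset by auto
  have "insert 0 U \<subseteq> {..<k}" using U assms(1) by auto
  moreover have "Max (insert 0 U) \<in> insert 0 U" using \<open>finite U\<close> by (intro Max_in) simp_all
  ultimately show "vclass x < k" using x \<open>finite U\<close> by auto
qed auto

lemma asym_gadget_arcs: "asym (gadget_arcs k)"
  unfolding gadget_arcs_def using asym_gadget_arc by (intro asymI) blast

lemma gadget_arcs_subset: "gadget_arcs k \<subseteq> gadget_verts k \<times> gadget_verts k"
  unfolding gadget_arcs_def by blast

lemma in_twins_gadget_arcs:
  assumes "x \<in> gadget_verts k" "y \<in> gadget_verts k" "vclass x = vclass y"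
  shows "in_twins (gadget_arcs k) x y"
  using assms unfolding in_twins_def gadget_arcs_def by (simp add: gadget_arc_iff_class)

lemma ref_set_adjacent_iff:
  assumes "i < k" "U \<subseteq> {..<k}"
  shows "(ref_vtx i, set_vtx U) \<in> gadget_arcs k \<union> (gadget_arcs k)\<inverse> \<longleftrightarrow> i \<in> U"
proof -
  have "ref_vtx i \<in> gadget_verts k" "set_vtx U \<in> gadget_verts k"
    using assms unfolding gadget_verts_def by auto
  moreover have "finite U" using assms(2) finite_subset by blast
  ultimately show ?thesis unfolding gadget_arcs_def using gadget_arc_ref_set_iff by simp
qed

lemma adim_gadget_graph: "adim (gadget_verts k) (urel (underlying (gadget_arcs k))) \<le> k"
proof -
  let ?V = "gadget_verts k" and ?R = "gadget_arcs k \<union> (gadget_arcs k)\<inverse>"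
  let ?A = "ref_vtx ` {..<k}"
  have "adj_resolving ?V ?R ?A"
  proof (rule adj_resolving_if_neighbours_separate)
    fix x y assume x: "x \<in> ?V - ?A" and y: "y \<in> ?V - ?A" and "x \<noteq> y"
    from x obtain U where U: "U \<subseteq> {..<k}" "x = set_vtx U" unfolding gadget_verts_def by blast
    from y obtain W where W: "W \<subseteq> {..<k}" "y = set_vtx W" unfolding gadget_verts_def by blast
    have "U \<noteq> W" using \<open>x \<noteq> y\<close> U W by blast
    then obtain i where i: "i \<in> U \<longleftrightarrow> i \<notin> W" by blast
    then have "i < k" using U W by blast
    have "(ref_vtx i, x) \<in> ?R \<longleftrightarrow> i \<in> U" "(ref_vtx i, y) \<in> ?R \<longleftrightarrow> i \<in> W"
      using ref_set_adjacent_iff[OF \<open>i < k\<close>] U W by simp_all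
    then show "\<exists>z\<in>?A. (z, x) \<in> ?R \<longleftrightarrow> (z, y) \<notin> ?R"
      using i \<open>i < k\<close> by (intro bexI[of _ "ref_vtx i"]) auto
  qed (auto simp: gadget_verts_def)
  then have "adim ?V ?R \<le> card ?A" by (rule adim_le_card)
  also have "card ?A = k" by (simp add: card_image inj_on_subset[OF inj_ref_vtx])
  finally show ?thesis by (simp add: urel_underlying asym_gadget_arcs)
qed

lemma bdim_gadget_digraph:
  assumes "0 < k"
  shows "2 ^ k \<le> bdim (gadget_verts k) (gadget_arcs k)"
proof -
  have "vclass ` gadget_verts k \<subseteq> {..<k}" using vclass_lt_if_gadget_vert[OF assms] by auto
  then have "card (vclass ` gadget_verts k) \<le> k" by (metis card_lessThan card_mono finite_lessThan)
  then have "2 ^ k \<le> card (gadget_verts k) - card (vclass ` gadget_verts k)"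
    by (simp add: card_gadget_verts)
  also have "\<dots> \<le> bdim (gadget_verts k) (gadget_arcs k)"
    by (rule bdim_ge_card_minus_twin_classes[OF finite_gadget_verts in_twins_gadget_arcs])
  finally show ?thesis .
qed

theorem theorem5p3:
  fixes k :: nat
  assumes "k \<ge> 1"
  shows "\<exists>(V :: nat set) E D. simple_graph V E \<and> is_orientation E D \<and>
           k \<ge> adim V (urel E) \<and> adim V (urel E) \<ge> bdim V (urel E) \<and>
           adim V D \<ge> bdim V D \<and> bdim V D \<ge> 2 ^ k"
proof (intro exI conjI)
  show "simple_graph (gadget_verts k) (underlying (gadget_arcs k))"
    using finite_gadget_verts gadget_arcs_subset asym_gadget_arcs
    by (rule simple_graph_underlying[OF _ _ irrefl_on_if_asym_on])
  show "is_orientation (underlying (gadget_arcs k)) (gadget_arcs k)"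
    using asym_gadget_arcs by (rule is_orientation_underlying)
  show "adim (gadget_verts k) (urel (underlying (gadget_arcs k))) \<le> k"
    by (rule adim_gadget_graph)
  show "2 ^ k \<le> bdim (gadget_verts k) (gadget_arcs k)"
    using assms by (intro bdim_gadget_digraph) simp
qed (rule bdim_le_adim[OF finite_gadget_verts])+

end
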